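(* Let $n\in\mathbb{N}=\{1,2,\dots\}$. Then, with $t_1<\dots<t_n$ the zeros of $H_n$, $$\|h_n\|_1=\int_{-\infty}^\infty|h_n(t)|\,dt=\frac1n\sum_{m=1}^n(-1)^{m+n}h_{n-1}(t_m);$$ with $t_1<\dots<t_{2n+1}$ the zeros of $H_{2n+1}$, $$\int_{-\infty}^\infty\frac{t^{2n}}{(2n)!}|h_{2n+1}(t)|\,dt=\frac{1}{(2n+1)!}\sum_{m=1}^{2n+1}(-1)^{m+1}\sum_{k=0}^{2n}\frac{1}{2^k}t_m^{2n-k}h_{2n-k}(t_m);$$ and with $t_1<\dots<t_{2n}$ the zeros of $H_{2n}$, $$\int_{-\infty}^\infty\frac{|t|^{2n-1}}{(2n-1)!}|h_{2n}(t)|\,dt=\frac{1}{(2n)!}\sum_{m=1}^{n}(-1)^{m+1}\sum_{k=0}^{2n-1}\frac{1}{2^k}t_m^{2n-1-k}h_{2n-1-k}(t_m)+\frac{(-1)^n}{(2n)!\,2^{2n-1}\sqrt{\pi}}+\frac{1}{(2n)!}\sum_{m=n+1}^{2n}(-1)^{m}\sum_{k=0}^{2n-1}\frac{1}{2^k}t_m^{2n-1-k}h_{2n-1-k}(t_m).$$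
   Context: $H_n$ denotes the $n$-th Hermite polynomial ($H_n(t)=(-1)^ne^{t^2}\frac{d^n}{dt^n}e^{-t^2}$), and the Hermite functions are $h_n(t)=\frac{1}{2^nn!\sqrt{\pi}}e^{-t^2}H_n(t)$, $t\in\mathbb{R}$. *)

theory Defs
  imports "HOL-Analysis.Analysis"
begin

definition hermite :: "nat \<Rightarrow> real \<Rightarrow> real" where
  "hermite n t = (-1) ^ n * exp (t\<^sup>2) * (deriv ^^ n) (\<lambda>s. exp (- s\<^sup>2)) t"

definition hermite_fun :: "nat \<Rightarrow> real \<Rightarrow> real" where
  "hermite_fun n t = exp (- t\<^sup>2) * hermite n t / (2 ^ n * fact n * sqrt pi)"

definition hermite_zero :: "nat \<Rightarrow> nat \<Rightarrow> real" where
  "hermite_zero n m = sorted_list_of_set {t. hermite n t = 0} ! (m - 1)"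

end

(*
  Each integrand phi has an explicit antiderivative Phi vanishing at +-infinity:
  h_n = -h_(n-1)' / (2n), and t^M/M! h_(M+1) = -T_M' / (2 (M+1)!) where
  T_M t = sum_k 2^-k t^(M-k) h_(M-k)(t) (hermite_sum M) telescopes as h_k' = -2(k+1) h_(k+1).
  Rolle's theorem applied to e^(-t^2) H_(n-1), which vanishes at +-infinity, shows that
  H_n has n simple real zeros, so the sign of phi at t is (-1)^(number of zeros right of t);
  for |t|^(2n-1) h_(2n) the point 0 is one more sign change. Integrating |phi| = +-Phi'
  between consecutive sign changes telescopes to sum_m 2 (-1)^(N-m+1) Phi(t_m).
*)

theory Submission
  imports Defs "HOL-Computational_Algebra.Polynomial" "HOL-Real_Asymp.Real_Asymp"
begin

section \<open>Hermite polynomials and Hermite functions\<close>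

fun hermite_poly :: "nat \<Rightarrow> real poly" where
  "hermite_poly 0 = 1"
| "hermite_poly (Suc n) = [:0, 2:] * hermite_poly n - pderiv (hermite_poly n)"

declare hermite_poly.simps(2)[simp del]

lemma deriv_funpow_gaussian:
  "(deriv ^^ n) (\<lambda>s. exp (- s\<^sup>2)) = (\<lambda>t. (-1) ^ n * exp (- t\<^sup>2) * poly (hermite_poly n) t)"
proof (induction n)
  case 0
  then show ?case by simp
next
  case (Suc n)
  have "DERIV (\<lambda>t. (-1) ^ n * exp (- t\<^sup>2) * poly (hermite_poly n) t) t :>
     (-1) ^ Suc n * exp (- t\<^sup>2) * poly (hermite_poly (Suc n)) t" for t
    by (auto intro!: derivative_eq_intros poly_DERIV[THEN DERIV_cong]
        simp: algebra_simps power2_eq_square hermite_poly.simps(2))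
  then show ?case
    unfolding funpow.simps comp_def Suc.IH by (intro ext DERIV_imp_deriv)
qed

lemma hermite_eq_poly: "hermite n t = poly (hermite_poly n) t"
  unfolding hermite_def deriv_funpow_gaussian by (simp add: exp_minus field_simps)

lemma hermite_fun_eq:
  "hermite_fun n t = exp (- t\<^sup>2) * poly (hermite_poly n) t / (2 ^ n * fact n * sqrt pi)"
  by (simp add: hermite_fun_def hermite_eq_poly)

lemma degree_lead_coeff_hermite_poly:
  "degree (hermite_poly n) = n \<and> lead_coeff (hermite_poly n) = 2 ^ n"
proof (induction n)
  case 0
  then show ?case by simp
next
  case (Suc n)
  have deg: "degree ([:0, 2:] * hermite_poly n) = Suc n"
    using Suc by (subst degree_mult_eq) auto
  have "coeff (hermite_poly n) n = 2 ^ n"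
    using Suc by metis
  then have lead: "coeff ([:0, 2:] * hermite_poly n) (Suc n) = 2 ^ Suc n"
    by (simp add: coeff_pCons)
  have lower: "degree (pderiv (hermite_poly n)) < Suc n"
    using Suc by (metis degree_pderiv diff_le_self le_imp_less_Suc)
  then have "degree ([:0, 2:] * hermite_poly n - pderiv (hermite_poly n)) = Suc n"
    using deg by (metis degree_add_eq_left degree_minus diff_conv_add_uminus)
  with lead show ?case
    by (simp add: hermite_poly.simps(2) coeff_eq_0[OF lower])
qed

lemma hermite_poly_nonzero: "hermite_poly n \<noteq> 0"
  using degree_lead_coeff_hermite_poly[of n] by auto

lemma pderiv_hermite_poly: "pderiv (hermite_poly (Suc n)) = smult (2 * (n + 1)) (hermite_poly n)"
proof (induction n)
  case 0
  then show ?case by (simp add: pderiv_pCons hermite_poly.simps(2))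
next
  case (Suc n)
  have "pderiv (hermite_poly (Suc (Suc n)))
      = smult 2 (hermite_poly (Suc n)) + [:0, 2:] * pderiv (hermite_poly (Suc n))
        - pderiv (pderiv (hermite_poly (Suc n)))"
    by (simp add: hermite_poly.simps(2)[of "Suc n"] pderiv_diff pderiv_mult pderiv_pCons
        pderiv_smult algebra_simps)
  also have "\<dots> = smult (2 * (real (Suc n) + 1)) (hermite_poly (Suc n))"
    unfolding Suc.IH by (simp add: pderiv_smult hermite_poly.simps(2)[of n] algebra_simps
        smult_add_left[symmetric] smult_diff_right)
  finally show ?case .
qed

lemma hermite_poly_Suc_Suc:
  "hermite_poly (Suc (Suc n)) = [:0, 2:] * hermite_poly (Suc n) - smult (2 * (n + 1)) (hermite_poly n)"
  using pderiv_hermite_poly[of n] by (simp add: hermite_poly.simps(2)[of "Suc n"])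

lemma poly_hermite_poly_minus: "poly (hermite_poly n) (- t) = (-1) ^ n * poly (hermite_poly n) t"
proof (induction n rule: induct_nat_012)
  case (ge2 n)
  then show ?case by (simp add: hermite_poly_Suc_Suc algebra_simps)
qed (simp_all add: hermite_poly.simps(2))

lemma poly_hermite_poly_even_0: "poly (hermite_poly (2 * n)) 0 \<noteq> 0"
proof (induction n)
  case (Suc n)
  then show ?case
    using hermite_poly_Suc_Suc[of "2 * n"] by simp
qed simp

lemma gaussian_hermite_poly_deriv:
  "DERIV (\<lambda>t. exp (- t\<^sup>2) * poly (hermite_poly n) t) t
     :> - (exp (- t\<^sup>2) * poly (hermite_poly (Suc n)) t)"
  by (auto intro!: derivative_eq_intros poly_DERIV[THEN DERIV_cong]
      simp: hermite_poly.simps(2) algebra_simps)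

lemma hermite_fun_deriv:
  "DERIV (hermite_fun n) t :> - (2 * real (Suc n)) * hermite_fun (Suc n) t"
proof -
  define c where "c k = 2 ^ k * fact k * sqrt pi" for k
  define g where "g k = exp (- t\<^sup>2) * poly (hermite_poly k) t" for k
  have "DERIV (\<lambda>t. exp (- t\<^sup>2) * poly (hermite_poly n) t / c n) t :> - g (Suc n) / c n"
    unfolding g_def by (intro DERIV_cdivide gaussian_hermite_poly_deriv)
  moreover have "c (Suc n) = 2 * real (Suc n) * c n"
    by (simp add: c_def del: of_nat_Suc)
  ultimately show ?thesis
    unfolding hermite_fun_eq[abs_def] c_def[symmetric] g_def by (simp del: of_nat_Suc)
qed

lemma tendsto_gaussian_poly:
  fixes p :: "real poly"
  shows "((\<lambda>t. exp (- t\<^sup>2) * poly p t) \<longlongrightarrow> 0) at_top"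
    and "((\<lambda>t. exp (- t\<^sup>2) * poly p t) \<longlongrightarrow> 0) at_bot"
proof -
  have eq: "exp (- t\<^sup>2) * poly p t = (\<Sum>i\<le>degree p. coeff p i * (t ^ i * exp (- t\<^sup>2)))" for t
    by (simp add: poly_altdef sum_distrib_left algebra_simps)
  have "((\<lambda>t::real. t ^ i * exp (- t\<^sup>2)) \<longlongrightarrow> 0) at_top"
    and "((\<lambda>t::real. t ^ i * exp (- t\<^sup>2)) \<longlongrightarrow> 0) at_bot" for i
    by real_asymp+
  then show "((\<lambda>t. exp (- t\<^sup>2) * poly p t) \<longlongrightarrow> 0) at_top"
    and "((\<lambda>t. exp (- t\<^sup>2) * poly p t) \<longlongrightarrow> 0) at_bot"
    unfolding eq by (auto intro!: tendsto_null_sum tendsto_mult_right_zero)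
qed

lemma tendsto_power_mult_hermite_fun:
  "((\<lambda>t. t ^ j * hermite_fun n t) \<longlongrightarrow> 0) at_top"
  "((\<lambda>t. t ^ j * hermite_fun n t) \<longlongrightarrow> 0) at_bot"
proof -
  have eq: "(\<lambda>t. t ^ j * hermite_fun n t) =
     (\<lambda>t. exp (- t\<^sup>2) * poly ([:0, 1:] ^ j * hermite_poly n) t / (2 ^ n * fact n * sqrt pi))"
    by (simp add: hermite_fun_eq poly_power ac_simps)
  show "((\<lambda>t. t ^ j * hermite_fun n t) \<longlongrightarrow> 0) at_top"
    "((\<lambda>t. t ^ j * hermite_fun n t) \<longlongrightarrow> 0) at_bot"
    unfolding eq by (intro tendsto_divide_zero tendsto_gaussian_poly)+
qed

lemma tendsto_hermite_fun: "(hermite_fun n \<longlongrightarrow> 0) at_top" "(hermite_fun n \<longlongrightarrow> 0) at_bot"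
  using tendsto_power_mult_hermite_fun[of 0 n] by simp_all

lemma isCont_hermite_fun: "isCont (hermite_fun n) t"
  using hermite_fun_deriv DERIV_isCont by blast

section \<open>The real zeros of the Hermite polynomials\<close>

lemma Rolle_DERIV:
  fixes f f' :: "real \<Rightarrow> real"
  assumes der: "\<And>x. DERIV f x :> f' x" and "a < b" "f a = f b"
  shows "\<exists>z. a < z \<and> z < b \<and> f' z = 0"
proof -
  have "continuous_on {a..b} f"
    using der by (meson DERIV_isCont continuous_at_imp_continuous_on)
  moreover have "f differentiable (at x)" for x
    using der real_differentiable_def by blast
  ultimately obtain z where "a < z" "z < b" "DERIV f z :> 0"
    using Rolle[OF \<open>a < b\<close> \<open>f a = f b\<close>] by blast
  then show ?thesis
    using der DERIV_unique by blast
qed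

lemma Rolle_at_bot_pos:
  fixes f f' :: "real \<Rightarrow> real"
  assumes der: "\<And>x. DERIV f x :> f' x" and lim: "(f \<longlongrightarrow> 0) at_bot"
    and "f a = 0" "b < a" "f b > 0"
  shows "\<exists>x<a. f' x = 0"
proof -
  have cont: "continuous_on S f" for S
    using der by (meson DERIV_isCont continuous_at_imp_continuous_on)
  \<comment> \<open>As \<open>f \<longlongrightarrow> 0\<close>, \<open>f\<close> takes the value \<open>f b / 2\<close> left of \<open>b\<close> and again in \<open>[b, a]\<close>.\<close>
  define y where "y = f b / 2"
  have "y > 0" "y < f b"
    using \<open>f b > 0\<close> by (simp_all add: y_def)
  then have "eventually (\<lambda>x. f x < y) at_bot"
    using order_tendstoD(2)[OF lim] by blast
  then obtain N where N: "\<And>x. x \<le> N \<Longrightarrow> f x < y"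
    by (auto simp: eventually_at_bot_linorder)
  define c where "c = min N (b - 1)"
  have "c \<le> b" "f c < y"
    using N by (auto simp: c_def)
  then obtain p where "p \<le> b" "f p = y"
    using IVT'[of f c y b] cont \<open>y < f b\<close> by fastforce
  obtain q where "b \<le> q" "q \<le> a" "f q = y"
    using IVT2'[of f a y b] cont \<open>f a = 0\<close> \<open>y > 0\<close> \<open>y < f b\<close> \<open>b < a\<close> by fastforce
  have "p < q"
    using \<open>p \<le> b\<close> \<open>b \<le> q\<close> \<open>f p = y\<close> \<open>y < f b\<close> by (cases "p = b") auto
  moreover have "q < a"
    using \<open>q \<le> a\<close> \<open>f q = y\<close> \<open>f a = 0\<close> \<open>y > 0\<close> by (cases "q = a") auto
  moreover obtain z where "z < q" "f' z = 0"
    using Rolle_DERIV[OF der \<open>p < q\<close>] \<open>f p = y\<close> \<open>f q = y\<close> by auto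
  ultimately show ?thesis
    by (intro exI[of _ z]) simp
qed

lemma Rolle_at_bot:
  fixes f f' :: "real \<Rightarrow> real"
  assumes der: "\<And>x. DERIV f x :> f' x" and lim: "(f \<longlongrightarrow> 0) at_bot"
    and "f a = 0" "b < a" "f b \<noteq> 0"
  shows "\<exists>x<a. f' x = 0"
proof (cases "f b > 0")
  case True
  then show ?thesis
    using Rolle_at_bot_pos[OF der lim] assms(3,4) by blast
next
  case False
  have "DERIV (\<lambda>x. - f x) x :> - f' x" for x
    using der by (rule DERIV_minus)
  moreover have "((\<lambda>x. - f x) \<longlongrightarrow> 0) at_bot"
    using tendsto_minus[OF lim] by simp
  ultimately show ?thesis
    using Rolle_at_bot_pos[of "\<lambda>x. - f x" "\<lambda>x. - f' x" a b] False assms(3-5) by auto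
qed

lemma Rolle_at_top:
  fixes f f' :: "real \<Rightarrow> real"
  assumes der: "\<And>x. DERIV f x :> f' x" and lim: "(f \<longlongrightarrow> 0) at_top"
    and "f a = 0" "a < b" "f b \<noteq> 0"
  shows "\<exists>x>a. f' x = 0"
proof -
  have "DERIV (\<lambda>x. f (- x)) x :> - f' (- x)" for x
    using der DERIV_mirror by blast
  moreover have "((\<lambda>x. f (- x)) \<longlongrightarrow> 0) at_bot"
    using lim by (simp add: at_bot_mirror filterlim_filtermap)
  ultimately obtain x where "x < - a" "f' (- x) = 0"
    using Rolle_at_bot[of "\<lambda>x. f (- x)" "\<lambda>x. - f' (- x)" "- a" "- b"] assms(3-5) by auto
  then show ?thesis
    by (intro exI[of _ "- x"]) auto
qed

lemma Rolle_zeros_between: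
  fixes f f' :: "real \<Rightarrow> real"
  assumes der: "\<And>x. DERIV f x :> f' x"
    and "finite A" "A \<noteq> {}" "\<And>a. a \<in> A \<Longrightarrow> f a = 0"
  shows "\<exists>B. finite B \<and> card B + 1 = card A \<and> B \<subseteq> {x. f' x = 0} \<inter> {Min A<..<Max A}"
  using assms(2-4)
proof (induction A rule: finite_linorder_max_induct)
  case empty
  then show ?case by simp
next
  case (insert b A)
  show ?case
  proof (cases "A = {}")
    case True
    then show ?thesis by (intro exI[of _ "{}"]) simp
  next
    case False
    obtain B where B: "finite B" "card B + 1 = card A" "B \<subseteq> {x. f' x = 0} \<inter> {Min A<..<Max A}"
      using insert False by auto
    have "Max A < b" "f (Max A) = 0" "f b = 0"
      using insert False by auto
    then obtain z where z: "Max A < z" "z < b" "f' z = 0"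
      using Rolle_DERIV[OF der] by metis
    have "Min A \<le> Max A"
      using insert.hyps False by simp
    then have "Min (insert b A) = Min A" "Max (insert b A) = b"
      using \<open>Max A < b\<close> insert.hyps(1) False by simp_all
    have "z \<notin> B" "b \<notin> A"
      using B z insert.hyps(2) by auto
    show ?thesis
    proof (intro exI[of _ "insert z B"] conjI)
      show "finite (insert z B)"
        using B by simp
      show "card (insert z B) + 1 = card (insert b A)"
        using B \<open>z \<notin> B\<close> \<open>b \<notin> A\<close> insert.hyps(1) by simp
      show "insert z B \<subseteq> {x. f' x = 0} \<inter> {Min (insert b A)<..<Max (insert b A)}"
        using B z \<open>Min A \<le> Max A\<close> \<open>Min (insert b A) = Min A\<close> \<open>Max (insert b A) = b\<close>
        by auto
    qed
  qed
qed

lemma card_zeros_deriv_gt: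
  fixes f f' :: "real \<Rightarrow> real"
  assumes der: "\<And>x. DERIV f x :> f' x"
    and lim_bot: "(f \<longlongrightarrow> 0) at_bot" and lim_top: "(f \<longlongrightarrow> 0) at_top"
    and fin: "finite {x. f x = 0}" and fin': "finite {x. f' x = 0}" and ne: "{x. f x = 0} \<noteq> {}"
  shows "card {x. f' x = 0} > card {x. f x = 0}"
proof -
  define m where "m = Min {x. f x = 0}"
  define M where "M = Max {x. f x = 0}"
  have "f m = 0" "f M = 0"
    using Min_in[OF fin ne] Max_in[OF fin ne] by (simp_all add: m_def M_def)
  have bounds: "m \<le> x" "x \<le> M" if "f x = 0" for x
    using Min_le[OF fin] Max_ge[OF fin] that by (simp_all add: m_def M_def)
  obtain B where B: "finite B" "card B + 1 = card {x. f x = 0}" "B \<subseteq> {x. f' x = 0} \<inter> {m<..<M}"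
    using Rolle_zeros_between[OF der fin ne] unfolding m_def M_def by auto
  have "f (m - 1) \<noteq> 0" "f (M + 1) \<noteq> 0"
    using bounds[of "m - 1"] bounds[of "M + 1"] by force+
  then obtain x y where "x < m" "f' x = 0" "M < y" "f' y = 0"
    using Rolle_at_bot[OF der lim_bot \<open>f m = 0\<close>, of "m - 1"]
      Rolle_at_top[OF der lim_top \<open>f M = 0\<close>, of "M + 1"] by auto
  moreover have "x \<notin> B" "y \<notin> B" "x \<noteq> y"
    using B \<open>x < m\<close> \<open>M < y\<close> bounds[OF \<open>f m = 0\<close>] by auto
  ultimately have "insert x (insert y B) \<subseteq> {x. f' x = 0}"
    and "card (insert x (insert y B)) = card {x. f x = 0} + 1"
    using B by auto
  then have "card {x. f x = 0} + 1 \<le> card {x. f' x = 0}"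
    by (metis card_mono[OF fin'])
  then show ?thesis
    by simp
qed

definition hermite_zeros :: "nat \<Rightarrow> real set" where
  "hermite_zeros n = {t. poly (hermite_poly n) t = 0}"

lemma finite_hermite_zeros: "finite (hermite_zeros n)"
  unfolding hermite_zeros_def using poly_roots_finite[OF hermite_poly_nonzero] .

lemma hermite_zero_eq: "hermite_zero n m = sorted_list_of_set (hermite_zeros n) ! (m - 1)"
  by (simp add: hermite_zero_def hermite_zeros_def hermite_eq_poly)

lemma card_hermite_zeros: "card (hermite_zeros n) = n"
proof (induction n)
  case 0
  then show ?case by (simp add: hermite_zeros_def)
next
  case (Suc n)
  define f where "f k t = exp (- t\<^sup>2) * poly (hermite_poly k) t" for k t
  have zeros: "{t. f k t = 0} = hermite_zeros k" "{t. - f k t = 0} = hermite_zeros k" for k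
    by (simp_all add: f_def hermite_zeros_def)
  have "card (hermite_zeros (Suc n)) \<ge> Suc n"
  proof (cases "n = 0")
    case True
    have "hermite_zeros 1 = {0}"
      by (auto simp: hermite_zeros_def hermite_poly.simps(2))
    then show ?thesis
      using True by simp
  next
    case False
    have "card {t. - f (Suc n) t = 0} > card {t. f n t = 0}"
    proof (rule card_zeros_deriv_gt)
      show "DERIV (f n) t :> - f (Suc n) t" for t
        unfolding f_def by (rule gaussian_hermite_poly_deriv)
      show "(f n \<longlongrightarrow> 0) at_bot" "(f n \<longlongrightarrow> 0) at_top"
        unfolding f_def[abs_def] by (rule tendsto_gaussian_poly)+
    qed (use finite_hermite_zeros Suc False in \<open>auto simp: zeros\<close>)
    then show ?thesis
      using Suc by (simp add: zeros)
  qed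
  moreover have "card (hermite_zeros (Suc n)) \<le> Suc n"
    using card_poly_roots_bound[OF hermite_poly_nonzero] degree_lead_coeff_hermite_poly
    by (simp add: hermite_zeros_def)
  ultimately show ?case
    by simp
qed

lemma prod_roots_dvd_poly:
  fixes p :: "'a::idom poly"
  assumes "finite S" "\<And>z. z \<in> S \<Longrightarrow> poly p z = 0"
  shows "(\<Prod>z\<in>S. [:- z, 1:]) dvd p"
  using assms
proof (induction S arbitrary: p rule: finite_induct)
  case empty
  then show ?case by simp
next
  case (insert a S)
  obtain q where q: "p = [:- a, 1:] * q"
    using insert.prems poly_eq_0_iff_dvd by blast
  have "poly q z = 0" if "z \<in> S" for z
    using insert.prems[of z] insert.hyps(2) that by (auto simp: q)
  then have "(\<Prod>z\<in>S. [:- z, 1:]) dvd q"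
    by (rule insert.IH)
  then show ?case
    unfolding q prod.insert[OF insert.hyps] by (rule mult_dvd_mono[OF dvd_refl])
qed

lemma poly_eq_lead_coeff_prod_roots:
  fixes p :: "real poly"
  assumes "p \<noteq> 0" and card_roots: "card {x. poly p x = 0} = degree p"
  shows "poly p t = lead_coeff p * (\<Prod>z\<in>{x. poly p x = 0}. (t - z))"
proof -
  let ?P = "\<Prod>z\<in>{x. poly p x = 0}. [:- z, 1:]"
  have fin: "finite {x. poly p x = 0}"
    using poly_roots_finite[OF \<open>p \<noteq> 0\<close>] .
  obtain q where q: "p = ?P * q"
    using prod_roots_dvd_poly[OF fin] by (auto elim: dvdE)
  have "?P \<noteq> 0" "q \<noteq> 0" "degree ?P = degree p"
    using fin q \<open>p \<noteq> 0\<close> card_roots by (auto simp: degree_prod_eq_sum_degree)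
  then have "degree q = 0"
    using degree_mult_eq[of ?P q] q by simp
  then have "q = [:lead_coeff p:]"
    using q lead_coeff_mult[of ?P q] by (auto simp: lead_coeff_prod elim: degree_eq_zeroE)
  then show ?thesis
    by (subst q) (simp add: poly_prod)
qed

lemma abs_prod_diff:
  fixes S :: "real set"
  assumes "finite S"
  shows "\<bar>\<Prod>z\<in>S. (t - z)\<bar> = (-1) ^ card {z\<in>S. t < z} * (\<Prod>z\<in>S. (t - z))"
  using assms
proof (induction S rule: finite_induct)
  case empty
  then show ?case by simp
next
  case (insert a S)
  show ?case
  proof (cases "t < a")
    case True
    then have "{z\<in>insert a S. t < z} = insert a {z\<in>S. t < z}"
      by auto
    then show ?thesis
      using True insert by (simp add: abs_mult abs_of_neg) (simp add: algebra_simps)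
  next
    case False
    then have "{z\<in>insert a S. t < z} = {z\<in>S. t < z}"
      by auto
    then show ?thesis
      using False insert by (simp add: abs_mult)
  qed
qed

lemma poly_hermite_poly_eq_prod: "poly (hermite_poly n) t = 2 ^ n * (\<Prod>z\<in>hermite_zeros n. (t - z))"
proof -
  have "degree (hermite_poly n) = n" "lead_coeff (hermite_poly n) = 2 ^ n"
    using degree_lead_coeff_hermite_poly[of n] by blast+
  then show ?thesis
    using poly_eq_lead_coeff_prod_roots[OF hermite_poly_nonzero, of n t] card_hermite_zeros[of n]
    unfolding hermite_zeros_def by simp
qed

lemma abs_hermite_fun:
  "\<bar>hermite_fun n t\<bar> = (-1) ^ card {z\<in>hermite_zeros n. t < z} * hermite_fun n t"
  unfolding hermite_fun_eq poly_hermite_poly_eq_prod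
  using abs_prod_diff[OF finite_hermite_zeros] by (simp add: abs_mult)

lemma hermite_fun_hermite_zeros: "z \<in> hermite_zeros n \<Longrightarrow> hermite_fun n z = 0"
  by (simp add: hermite_fun_eq hermite_zeros_def)

lemma minus_mem_hermite_zeros_iff: "- z \<in> hermite_zeros n \<longleftrightarrow> z \<in> hermite_zeros n"
  by (simp add: hermite_zeros_def poly_hermite_poly_minus)

lemma zero_not_mem_hermite_zeros_even: "0 \<notin> hermite_zeros (2 * n)"
  using poly_hermite_poly_even_0[of n] by (simp add: hermite_zeros_def)

lemma card_positive_hermite_zeros_even: "card {z\<in>hermite_zeros (2 * n). 0 < z} = n"
proof -
  let ?Z = "hermite_zeros (2 * n)"
  let ?P = "{z\<in>?Z. 0 < z}" and ?N = "{z\<in>?Z. z < 0}"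
  have "?N = uminus ` ?P"
  proof (intro equalityI subsetI)
    fix z
    assume "z \<in> ?N"
    then show "z \<in> uminus ` ?P"
      by (intro rev_image_eqI[of "- z"]) (auto simp: minus_mem_hermite_zeros_iff)
  qed (auto simp: minus_mem_hermite_zeros_iff)
  then have "card ?N = card ?P"
    by (simp add: card_image inj_on_def)
  moreover have "?Z = ?P \<union> ?N"
    using zero_not_mem_hermite_zeros_even[of n] by (auto simp: not_less le_less)
  then have "card ?Z = card (?P \<union> ?N)"
    by (rule arg_cong)
  moreover have "card (?P \<union> ?N) = card ?P + card ?N"
    using finite_hermite_zeros[of "2 * n"] by (intro card_Un_disjoint) auto
  ultimately show ?thesis
    using card_hermite_zeros[of "2 * n"] by linarith
qed

section \<open>Integrating an absolute value across its sign changes\<close>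

lemma eventually_at_left_same_side:
  fixes S :: "real set"
  assumes "finite S"
  shows "\<forall>\<^sub>F s in at_left t. \<forall>w\<in>S. (s \<le> w \<longleftrightarrow> t \<le> w) \<and> (w < s \<longleftrightarrow> w < t)"
proof (rule eventually_ball_finite[OF assms], intro ballI)
  fix w
  have "\<forall>\<^sub>F s in at_left t. s \<in> {(if w < t then w else t - 1)<..<t}"
    by (rule eventually_at_left_real) simp
  then show "\<forall>\<^sub>F s in at_left t. (s \<le> w \<longleftrightarrow> t \<le> w) \<and> (w < s \<longleftrightarrow> w < t)"
    by eventually_elim (auto split: if_splits)
qed

lemma eventually_at_right_same_side:
  fixes S :: "real set"
  assumes "finite S"
  shows "\<forall>\<^sub>F s in at_right t. \<forall>w\<in>S. (s \<le> w \<longleftrightarrow> t < w) \<and> (w < s \<longleftrightarrow> w \<le> t)"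
proof (rule eventually_ball_finite[OF assms], intro ballI)
  fix w
  have "\<forall>\<^sub>F s in at_right t. s \<in> {t<..<(if t < w then w else t + 1)}"
    by (rule eventually_at_right_real) simp
  then show "\<forall>\<^sub>F s in at_right t. (s \<le> w \<longleftrightarrow> t < w) \<and> (w < s \<longleftrightarrow> w \<le> t)"
    by eventually_elim (auto split: if_splits)
qed

lemma DERIV_glue_at_left_right:
  fixes f g h :: "real \<Rightarrow> real"
  assumes "\<forall>\<^sub>F s in at_left x. f s = g s" "\<forall>\<^sub>F s in at_right x. f s = h s"
    and "g x = f x" "h x = f x" and "DERIV g x :> D" "DERIV h x :> D"
  shows "DERIV f x :> D"
proof -
  have "((\<lambda>y. (g y - g x) / (y - x)) \<longlongrightarrow> D) (at_left x)"
    and "((\<lambda>y. (h y - h x) / (y - x)) \<longlongrightarrow> D) (at_right x)"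
    using assms(5,6) by (simp_all add: has_field_derivative_iff filterlim_at_split)
  moreover have "\<forall>\<^sub>F y in at_left x. (g y - g x) / (y - x) = (f y - f x) / (y - x)"
    and "\<forall>\<^sub>F y in at_right x. (h y - h x) / (y - x) = (f y - f x) / (y - x)"
    using assms(1-4) by (auto elim: eventually_mono)
  ultimately show ?thesis
    by (auto simp: has_field_derivative_iff filterlim_at_split intro: Lim_transform_eventually)
qed

text \<open>The sign of \<open>\<Phi>\<close> flips at each point of \<open>S\<close>; the accumulated constants keep the
  function continuous there.\<close>

definition sign_antideriv :: "real set \<Rightarrow> (real \<Rightarrow> real) \<Rightarrow> real \<Rightarrow> real" where
  "sign_antideriv S \<Phi> t = (-1) ^ card {w\<in>S. t \<le> w} * \<Phi> t
     + (\<Sum>z\<in>{z\<in>S. z < t}. 2 * (-1) ^ Suc (card {w\<in>S. z < w}) * \<Phi> z)"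

lemma DERIV_sign_antideriv:
  fixes \<phi> \<Phi> :: "real \<Rightarrow> real"
  assumes fin: "finite S" and der: "\<And>t. DERIV \<Phi> t :> \<phi> t"
    and zero: "\<And>z. z \<in> S \<Longrightarrow> \<phi> z = 0"
    and sgn: "\<And>t. t \<notin> S \<Longrightarrow> \<bar>\<phi> t\<bar> = (-1) ^ card {z\<in>S. t < z} * \<phi> t"
  shows "DERIV (sign_antideriv S \<Phi>) t :> \<bar>\<phi> t\<bar>"
proof -
  define c where "c z = 2 * (-1) ^ Suc (card {w\<in>S. z < w}) * \<Phi> z" for z
  define g where "g s = (-1) ^ card {w\<in>S. t \<le> w} * \<Phi> s + (\<Sum>z\<in>{z\<in>S. z < t}. c z)" for s
  define h where "h s = (-1) ^ card {w\<in>S. t < w} * \<Phi> s + (\<Sum>z\<in>{z\<in>S. z \<le> t}. c z)" for s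
  have "DERIV g t :> (-1) ^ card {w\<in>S. t \<le> w} * \<phi> t" "DERIV h t :> (-1) ^ card {w\<in>S. t < w} * \<phi> t"
    unfolding g_def h_def by (auto intro!: derivative_eq_intros der)
  moreover have "h t = g t \<and> (-1) ^ card {w\<in>S. t \<le> w} * \<phi> t = \<bar>\<phi> t\<bar>
      \<and> (-1) ^ card {w\<in>S. t < w} * \<phi> t = \<bar>\<phi> t\<bar>"
  proof (cases "t \<in> S")
    case True
    then have le: "{w\<in>S. t \<le> w} = insert t {w\<in>S. t < w}" "{z\<in>S. z \<le> t} = insert t {z\<in>S. z < t}"
      by auto
    show ?thesis
      unfolding g_def h_def le using True fin zero[OF True] by (simp add: c_def)
  next
    case False
    then have le: "{w\<in>S. t \<le> w} = {w\<in>S. t < w}" "{z\<in>S. z \<le> t} = {z\<in>S. z < t}"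
      by (auto simp: le_less)
    show ?thesis
      unfolding g_def h_def le using sgn[OF False] by simp
  qed
  moreover have "\<forall>\<^sub>F s in at_left t. sign_antideriv S \<Phi> s = g s"
    using eventually_at_left_same_side[OF fin, of t]
  proof eventually_elim
    case (elim s)
    then have eqs: "{w\<in>S. s \<le> w} = {w\<in>S. t \<le> w}" "{z\<in>S. z < s} = {z\<in>S. z < t}"
      by auto
    show ?case
      unfolding sign_antideriv_def g_def c_def eqs ..
  qed
  moreover have "\<forall>\<^sub>F s in at_right t. sign_antideriv S \<Phi> s = h s"
    using eventually_at_right_same_side[OF fin, of t]
  proof eventually_elim
    case (elim s)
    then have eqs: "{w\<in>S. s \<le> w} = {w\<in>S. t < w}" "{z\<in>S. z < s} = {z\<in>S. z \<le> t}"
      by auto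
    show ?case
      unfolding sign_antideriv_def h_def c_def eqs ..
  qed
  moreover have "g t = sign_antideriv S \<Phi> t"
    unfolding sign_antideriv_def g_def c_def ..
  ultimately show ?thesis
    using DERIV_glue_at_left_right[of "sign_antideriv S \<Phi>" g t h] by metis
qed

lemma tendsto_sign_antideriv_at_bot:
  assumes "finite S" "(\<Phi> \<longlongrightarrow> L) at_bot"
  shows "(sign_antideriv S \<Phi> \<longlongrightarrow> (-1) ^ card S * L) at_bot"
proof (rule Lim_transform_eventually)
  show "((\<lambda>s. (-1) ^ card S * \<Phi> s) \<longlongrightarrow> (-1) ^ card S * L) at_bot"
    using assms(2) by (intro tendsto_intros)
  have "\<forall>\<^sub>F s in at_bot. \<forall>w\<in>S. s < w"
    using assms(1) by (intro eventually_ball_finite) (auto simp: eventually_at_bot_dense)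
  then show "\<forall>\<^sub>F s in at_bot. (-1) ^ card S * \<Phi> s = sign_antideriv S \<Phi> s"
  proof eventually_elim
    case (elim s)
    then have eqs: "{w\<in>S. s \<le> w} = S" "{z\<in>S. z < s} = {}"
      by auto
    show ?case
      unfolding sign_antideriv_def eqs by simp
  qed
qed

lemma tendsto_sign_antideriv_at_top:
  assumes "finite S" "(\<Phi> \<longlongrightarrow> L) at_top"
  shows "(sign_antideriv S \<Phi> \<longlongrightarrow> L + (\<Sum>z\<in>S. 2 * (-1) ^ Suc (card {w\<in>S. z < w}) * \<Phi> z)) at_top"
proof (rule Lim_transform_eventually)
  show "((\<lambda>s. \<Phi> s + (\<Sum>z\<in>S. 2 * (-1) ^ Suc (card {w\<in>S. z < w}) * \<Phi> z))
      \<longlongrightarrow> L + (\<Sum>z\<in>S. 2 * (-1) ^ Suc (card {w\<in>S. z < w}) * \<Phi> z)) at_top"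
    using assms(2) by (intro tendsto_intros)
  have "\<forall>\<^sub>F s in at_top. \<forall>w\<in>S. w < s"
    using assms(1) by (intro eventually_ball_finite) auto
  then show "\<forall>\<^sub>F s in at_top.
      \<Phi> s + (\<Sum>z\<in>S. 2 * (-1) ^ Suc (card {w\<in>S. z < w}) * \<Phi> z) = sign_antideriv S \<Phi> s"
  proof eventually_elim
    case (elim s)
    then have eqs: "{w\<in>S. s \<le> w} = {}" "{z\<in>S. z < s} = S"
      by auto
    show ?case
      unfolding sign_antideriv_def eqs by simp
  qed
qed

lemma integral_abs_eq_sign_sum:
  fixes \<phi> \<Phi> :: "real \<Rightarrow> real"
  assumes fin: "finite S" and der: "\<And>t. DERIV \<Phi> t :> \<phi> t" and cont: "\<And>t. isCont \<phi> t"
    and zero: "\<And>z. z \<in> S \<Longrightarrow> \<phi> z = 0"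
    and sgn: "\<And>t. t \<notin> S \<Longrightarrow> \<bar>\<phi> t\<bar> = (-1) ^ card {z\<in>S. t < z} * \<phi> t"
    and lim_bot: "(\<Phi> \<longlongrightarrow> 0) at_bot" and lim_top: "(\<Phi> \<longlongrightarrow> 0) at_top"
  shows "(\<integral>t. \<bar>\<phi> t\<bar> \<partial>lborel) = (\<Sum>z\<in>S. 2 * (-1) ^ Suc (card {w\<in>S. z < w}) * \<Phi> z)"
proof -
  have "(LBINT t=-\<infinity>..\<infinity>. \<bar>\<phi> t\<bar>) = 0 + (\<Sum>z\<in>S. 2 * (-1) ^ Suc (card {w\<in>S. z < w}) * \<Phi> z) - (-1) ^ card S * 0"
  proof (rule interval_integral_FTC_nonneg)
    show "DERIV (sign_antideriv S \<Phi>) t :> \<bar>\<phi> t\<bar>" for t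
      by (rule DERIV_sign_antideriv[OF fin der zero sgn])
    show "((sign_antideriv S \<Phi> \<circ> real_of_ereal) \<longlongrightarrow> (-1) ^ card S * 0) (at_right (- \<infinity>))"
      using tendsto_sign_antideriv_at_bot[OF fin lim_bot] by (simp add: ereal_tendsto_simps1)
    show "((sign_antideriv S \<Phi> \<circ> real_of_ereal) \<longlongrightarrow>
        0 + (\<Sum>z\<in>S. 2 * (-1) ^ Suc (card {w\<in>S. z < w}) * \<Phi> z)) (at_left \<infinity>)"
      using tendsto_sign_antideriv_at_top[OF fin lim_top] by (simp add: ereal_tendsto_simps1)
    show "isCont (\<lambda>t. \<bar>\<phi> t\<bar>) t" for t
      using cont by (rule continuous_intros)
    show "AE t in lborel. - \<infinity> < ereal t \<longrightarrow> ereal t < \<infinity> \<longrightarrow> 0 \<le> \<bar>\<phi> t\<bar>"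
      by simp
  qed simp
  then show ?thesis
    by (simp add: interval_lebesgue_integral_def einterval_eq_UNIV set_lebesgue_integral_def)
qed

lemma card_greater_sorted_list_of_set_nth:
  fixes S :: "'a::linorder set"
  assumes "finite S" "i < card S"
  shows "card {w\<in>S. sorted_list_of_set S ! i < w} = card S - Suc i"
proof -
  define xs where "xs = sorted_list_of_set S"
  have xs: "sorted_wrt (<) xs" "distinct xs" "set xs = S" "length xs = card S"
    using assms(1) by (simp_all add: xs_def)
  have less_iff: "xs ! i < xs ! j \<longleftrightarrow> i < j" if "j < card S" for j
  proof
    show "i < j \<Longrightarrow> xs ! i < xs ! j"
      using sorted_wrt_nth_less[OF xs(1)] that xs(4) by simp
    show "i < j" if "xs ! i < xs ! j"
    proof (rule ccontr)
      assume "\<not> i < j"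
      then have "xs ! j \<le> xs ! i"
        using sorted_nth_mono[OF strict_sorted_imp_sorted[OF xs(1)]] assms(2) xs(4) by simp
      with that show False
        by simp
    qed
  qed
  have bij: "bij_betw ((!) xs) {..<card S} S"
    using bij_betw_nth[OF xs(2)] xs(3,4) by simp
  have "{w\<in>S. xs ! i < w} = (!) xs ` {Suc i..<card S}"
  proof
    show "{w\<in>S. xs ! i < w} \<subseteq> (!) xs ` {Suc i..<card S}"
      using less_iff xs(3,4) by (auto simp: in_set_conv_nth)
    show "(!) xs ` {Suc i..<card S} \<subseteq> {w\<in>S. xs ! i < w}"
      using less_iff xs(3,4) by auto
  qed
  moreover have "inj_on ((!) xs) {Suc i..<card S}"
    using bij_betw_imp_inj_on[OF bij] by (rule inj_on_subset) auto
  ultimately show ?thesis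
    by (simp add: card_image xs_def)
qed

lemma card_greater_insert:
  fixes Z :: "'a::linorder set"
  assumes "finite Z" "a \<notin> Z"
  shows "card {w\<in>insert a Z. z < w} = card {w\<in>Z. z < w} + (if z < a then 1 else 0)"
proof (cases "z < a")
  case True
  then have "{w\<in>insert a Z. z < w} = insert a {w\<in>Z. z < w}"
    by auto
  then show ?thesis
    using True assms by simp
next
  case False
  then have "{w\<in>insert a Z. z < w} = {w\<in>Z. z < w}"
    by auto
  then show ?thesis
    using False by simp
qed

lemma sum_by_rank:
  fixes S :: "'a::linorder set"
  assumes "finite S"
  shows "(\<Sum>z\<in>S. F z (card {w\<in>S. z < w}))
    = (\<Sum>m=1..card S. F (sorted_list_of_set S ! (m - 1)) (card S - m))"
proof -
  define xs where "xs = sorted_list_of_set S"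
  have "bij_betw ((!) xs) {..<card S} S"
    using assms by (intro bij_betw_nth) (simp_all add: xs_def)
  then have "(\<Sum>z\<in>S. F z (card {w\<in>S. z < w})) = (\<Sum>i<card S. F (xs ! i) (card {w\<in>S. xs ! i < w}))"
    by (rule sum.reindex_bij_betw[symmetric])
  also have "\<dots> = (\<Sum>i<card S. F (xs ! i) (card S - Suc i))"
    using card_greater_sorted_list_of_set_nth[OF assms] by (simp add: xs_def)
  also have "\<dots> = (\<Sum>m=1..card S. F (xs ! (m - 1)) (card S - m))"
    by (simp add: sum.atLeast1_atMost_eq)
  finally show ?thesis
    by (simp add: xs_def)
qed

lemma integral_abs_eq_sorted_sum:
  fixes \<phi> \<Phi> :: "real \<Rightarrow> real"
  assumes fin: "finite S" and "\<And>t. DERIV \<Phi> t :> \<phi> t" and "\<And>t. isCont \<phi> t"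
    and "\<And>z. z \<in> S \<Longrightarrow> \<phi> z = 0"
    and "\<And>t. t \<notin> S \<Longrightarrow> \<bar>\<phi> t\<bar> = (-1) ^ card {z\<in>S. t < z} * \<phi> t"
    and "(\<Phi> \<longlongrightarrow> 0) at_bot" and "(\<Phi> \<longlongrightarrow> 0) at_top"
  shows "(\<integral>t. \<bar>\<phi> t\<bar> \<partial>lborel)
    = (\<Sum>m=1..card S. 2 * (-1) ^ Suc (card S - m) * \<Phi> (sorted_list_of_set S ! (m - 1)))"
  using integral_abs_eq_sign_sum[OF assms] sum_by_rank[OF fin, of "\<lambda>z k. 2 * (-1) ^ Suc k * \<Phi> z"]
  by simp

section \<open>The three integrals\<close>

lemma neg_one_power_diff: "m \<le> n \<Longrightarrow> (-1 :: 'a::ring_1) ^ (n - m) = (-1) ^ (m + n)"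
  by (metis add.commute neg_one_power_add_eq_neg_one_power_diff)

lemma hermite_fun_antideriv:
  "DERIV (\<lambda>t. - hermite_fun n t / (2 * real (Suc n))) t :> hermite_fun (Suc n) t"
proof -
  have "DERIV (\<lambda>t. - hermite_fun n t / (2 * real (Suc n))) t
      :> - (- (2 * real (Suc n)) * hermite_fun (Suc n) t) / (2 * real (Suc n))"
    by (intro DERIV_cdivide DERIV_minus hermite_fun_deriv)
  then show ?thesis
    by (simp del: of_nat_Suc)
qed

definition hermite_sum :: "nat \<Rightarrow> real \<Rightarrow> real" where
  "hermite_sum M t = (\<Sum>k=0..M. (1 / 2 ^ k) * t ^ (M - k) * hermite_fun (M - k) t)"

lemma hermite_sum_Suc: "hermite_sum (Suc M) t = t ^ Suc M * hermite_fun (Suc M) t + hermite_sum M t / 2"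
  unfolding hermite_sum_def
  by (subst sum.atLeast0_atMost_Suc_shift) (simp add: sum_divide_distrib mult_ac)

lemma hermite_sum_deriv:
  "DERIV (hermite_sum M) t :> - (2 * real (Suc M)) * t ^ M * hermite_fun (Suc M) t"
proof (induction M arbitrary: t)
  case 0
  then show ?case
    using hermite_fun_deriv[of 0 t] by (simp add: hermite_sum_def)
next
  case (Suc M)
  have "DERIV (\<lambda>t. t ^ Suc M) t :> real (Suc M) * t ^ M"
    using DERIV_pow[of "Suc M" t] by simp
  then have "DERIV (\<lambda>t. t ^ Suc M * hermite_fun (Suc M) t + hermite_sum M t / 2) t :>
      real (Suc M) * t ^ M * hermite_fun (Suc M) t
      + (- (2 * real (Suc (Suc M))) * hermite_fun (Suc (Suc M)) t) * t ^ Suc M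
      + - (2 * real (Suc M)) * t ^ M * hermite_fun (Suc M) t / 2"
    by (intro DERIV_add DERIV_mult DERIV_cdivide hermite_fun_deriv Suc.IH)
  then show ?case
    unfolding hermite_sum_Suc[abs_def] by (rule DERIV_cong) (simp add: field_simps)
qed

lemma hermite_sum_antideriv:
  "DERIV (\<lambda>t. - hermite_sum M t / (2 * fact (Suc M))) t :> t ^ M / fact M * hermite_fun (Suc M) t"
proof -
  have "fact (Suc M) = real (Suc M) * fact M"
    by (simp del: of_nat_Suc)
  moreover have "DERIV (\<lambda>t. - hermite_sum M t / (2 * fact (Suc M))) t
      :> - (- (2 * real (Suc M)) * t ^ M * hermite_fun (Suc M) t) / (2 * fact (Suc M))"
    by (intro DERIV_cdivide DERIV_minus hermite_sum_deriv)
  ultimately show ?thesis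
    by (simp del: of_nat_Suc fact_Suc)
qed

lemma tendsto_hermite_sum: "(hermite_sum M \<longlongrightarrow> 0) at_top" "(hermite_sum M \<longlongrightarrow> 0) at_bot"
  unfolding hermite_sum_def[abs_def] mult.assoc
  by (intro tendsto_null_sum tendsto_mult_right_zero tendsto_power_mult_hermite_fun)+

lemma hermite_sum_0: "hermite_sum M 0 = 1 / (2 ^ M * sqrt pi)"
proof -
  have "hermite_sum M 0 = (\<Sum>k\<in>{0..M}. if k = M then hermite_fun 0 0 / 2 ^ M else 0)"
    unfolding hermite_sum_def by (rule sum.cong) auto
  then show ?thesis
    by (simp add: hermite_fun_eq)
qed

lemma integral_abs_hermite_fun:
  assumes "n \<ge> 1"
  shows "(\<integral>t. \<bar>hermite_fun n t\<bar> \<partial>lborel)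
    = (1 / real n) * (\<Sum>m=1..n. (-1) ^ (m + n) * hermite_fun (n - 1) (hermite_zero n m))"
proof -
  obtain k where n: "n = Suc k"
    using assms by (cases n) auto
  define \<Phi> where "\<Phi> t = - hermite_fun (n - 1) t / (2 * real n)" for t
  have "(\<integral>t. \<bar>hermite_fun n t\<bar> \<partial>lborel)
      = (\<Sum>m=1..card (hermite_zeros n).
           2 * (-1) ^ Suc (card (hermite_zeros n) - m) * \<Phi> (sorted_list_of_set (hermite_zeros n) ! (m - 1)))"
  proof (rule integral_abs_eq_sorted_sum[OF finite_hermite_zeros])
    show "DERIV \<Phi> t :> hermite_fun n t" for t
      unfolding \<Phi>_def n using hermite_fun_antideriv[of k] by simp
    show "(\<Phi> \<longlongrightarrow> 0) at_bot" "(\<Phi> \<longlongrightarrow> 0) at_top"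
      unfolding \<Phi>_def[abs_def] using tendsto_hermite_fun[of "n - 1"]
      by (auto intro!: tendsto_divide_zero tendsto_minus[where a = 0, simplified])
  qed (simp_all add: isCont_hermite_fun hermite_fun_hermite_zeros abs_hermite_fun)
  also have "\<dots> = (1 / real n) * (\<Sum>m=1..n. (-1) ^ (m + n) * hermite_fun (n - 1) (hermite_zero n m))"
    unfolding card_hermite_zeros hermite_zero_eq sum_distrib_left
    using assms by (intro sum.cong) (auto simp: \<Phi>_def neg_one_power_diff)
  finally show ?thesis .
qed

lemma integral_power_abs_hermite_fun_odd:
  "(\<integral>t. t ^ (2*n) / fact (2*n) * \<bar>hermite_fun (2*n+1) t\<bar> \<partial>lborel)
    = (1 / fact (2*n+1)) * (\<Sum>m=1..2*n+1. (-1) ^ (m + 1) * hermite_sum (2*n) (hermite_zero (2*n+1) m))"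
proof -
  define \<phi> where "\<phi> t = t ^ (2*n) / fact (2*n) * hermite_fun (2*n+1) t" for t
  define \<Phi> where "\<Phi> t = - hermite_sum (2*n) t / (2 * fact (2*n+1))" for t
  have abs_power: "\<bar>t ^ (2*n)\<bar> = t ^ (2*n)" for t :: real
    by (simp add: power_mult)
  have "(\<integral>t. \<bar>\<phi> t\<bar> \<partial>lborel)
      = (\<Sum>m=1..card (hermite_zeros (2*n+1)). 2 * (-1) ^ Suc (card (hermite_zeros (2*n+1)) - m)
           * \<Phi> (sorted_list_of_set (hermite_zeros (2*n+1)) ! (m - 1)))"
  proof (rule integral_abs_eq_sorted_sum[OF finite_hermite_zeros])
    show "DERIV \<Phi> t :> \<phi> t" for t
      unfolding \<Phi>_def \<phi>_def using hermite_sum_antideriv[of "2*n"] by simp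
    show "isCont \<phi> t" for t
      unfolding \<phi>_def by (intro continuous_intros isCont_hermite_fun) simp
    show "(\<Phi> \<longlongrightarrow> 0) at_bot" "(\<Phi> \<longlongrightarrow> 0) at_top"
      unfolding \<Phi>_def[abs_def] using tendsto_hermite_sum[of "2*n"]
      by (auto intro!: tendsto_divide_zero tendsto_minus[where a = 0, simplified])
    show "\<bar>\<phi> t\<bar> = (-1) ^ card {z\<in>hermite_zeros (2*n+1). t < z} * \<phi> t" for t
      unfolding \<phi>_def using abs_hermite_fun[of "2*n+1" t] by (simp add: abs_mult abs_power)
  qed (simp add: \<phi>_def hermite_fun_hermite_zeros)
  also have "\<dots> = (1 / fact (2*n+1)) * (\<Sum>m=1..2*n+1. (-1) ^ (m + 1) * hermite_sum (2*n) (hermite_zero (2*n+1) m))"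
    unfolding card_hermite_zeros hermite_zero_eq sum_distrib_left
    by (rule sum.cong) (auto simp: \<Phi>_def neg_one_power_diff power_add power_mult)
  finally show ?thesis
    by (simp add: \<phi>_def abs_mult abs_power)
qed

lemma hermite_zero_even_neg_iff:
  assumes "1 \<le> m" "m \<le> 2 * n"
  shows "hermite_zero (2 * n) m < 0 \<longleftrightarrow> m \<le> n"
proof -
  let ?Z = "hermite_zeros (2 * n)" and ?z = "hermite_zero (2 * n) m"
  have fin: "finite {w\<in>?Z. 0 < w}" "finite {w\<in>?Z. ?z < w}"
    using finite_hermite_zeros by simp_all
  have above: "card {w\<in>?Z. ?z < w} = 2 * n - m"
    using card_greater_sorted_list_of_set_nth[OF finite_hermite_zeros, of "m - 1" "2 * n"] assms
    by (simp add: hermite_zero_eq card_hermite_zeros)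
  have "?z \<in> ?Z"
    using assms nth_mem[of "m - 1" "sorted_list_of_set ?Z"] finite_hermite_zeros[of "2 * n"]
    by (simp add: hermite_zero_eq card_hermite_zeros)
  then have "?z \<noteq> 0"
    using zero_not_mem_hermite_zeros_even by metis
  show ?thesis
  proof
    assume "?z < 0"
    then have "{w\<in>?Z. 0 < w} \<subseteq> {w\<in>?Z. ?z < w}"
      by auto
    from card_mono[OF fin(2) this] have "n \<le> 2 * n - m"
      unfolding above card_positive_hermite_zeros_even .
    then show "m \<le> n"
      using assms by simp
  next
    assume "m \<le> n"
    show "?z < 0"
    proof (rule ccontr)
      assume "\<not> ?z < 0"
      then have "{w\<in>?Z. ?z < w} \<subseteq> {w\<in>?Z. 0 < w} - {?z}"
        using \<open>?z \<noteq> 0\<close> by auto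
      from card_mono[OF _ this] fin(1) have "2 * n - m \<le> card ({w\<in>?Z. 0 < w} - {?z})"
        unfolding above by simp
      also have "\<dots> = n - 1"
        using \<open>\<not> ?z < 0\<close> \<open>?z \<noteq> 0\<close> \<open>?z \<in> ?Z\<close> fin(1)
        by (simp add: card_Diff_singleton card_positive_hermite_zeros_even)
      finally show False
        using \<open>m \<le> n\<close> assms by simp
    qed
  qed
qed

lemma sign_sum_insert_0_hermite_zeros_even:
  fixes \<Phi> :: "real \<Rightarrow> real"
  shows "(\<Sum>z\<in>insert 0 (hermite_zeros (2*n)).
        2 * (-1) ^ Suc (card {w\<in>insert 0 (hermite_zeros (2*n)). z < w}) * \<Phi> z)
    = 2 * (-1) ^ Suc n * \<Phi> 0 + 2 * (\<Sum>m=1..n. (-1) ^ m * \<Phi> (hermite_zero (2*n) m))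
      + 2 * (\<Sum>m=n+1..2*n. (-1) ^ Suc m * \<Phi> (hermite_zero (2*n) m))"
proof -
  let ?Z = "hermite_zeros (2 * n)"
  define r where "r z = (if z < 0 then 1 else 0 :: nat)" for z :: real
  define F where "F m = 2 * (-1) ^ Suc (2 * n - m + r (hermite_zero (2 * n) m)) * \<Phi> (hermite_zero (2 * n) m)"
    for m
  have "card {w\<in>insert 0 ?Z. z < w} = card {w\<in>?Z. z < w} + r z" for z
    unfolding r_def by (rule card_greater_insert[OF finite_hermite_zeros zero_not_mem_hermite_zeros_even])
  then have "(\<Sum>z\<in>insert 0 ?Z. 2 * (-1) ^ Suc (card {w\<in>insert 0 ?Z. z < w}) * \<Phi> z)
      = 2 * (-1) ^ Suc n * \<Phi> 0 + (\<Sum>z\<in>?Z. 2 * (-1) ^ Suc (card {w\<in>?Z. z < w} + r z) * \<Phi> z)"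
    unfolding sum.insert[OF finite_hermite_zeros zero_not_mem_hermite_zeros_even]
    by (simp add: r_def card_positive_hermite_zeros_even)
  also have "(\<Sum>z\<in>?Z. 2 * (-1) ^ Suc (card {w\<in>?Z. z < w} + r z) * \<Phi> z) = (\<Sum>m=1..2*n. F m)"
    using sum_by_rank[OF finite_hermite_zeros, of "\<lambda>z k. 2 * (-1) ^ Suc (k + r z) * \<Phi> z" "2 * n"]
    by (simp add: F_def card_hermite_zeros hermite_zero_eq)
  also have "\<dots> = (\<Sum>m=1..n. F m) + (\<Sum>m=n+1..2*n. F m)"
    using sum.ub_add_nat[of 1 n F n] by (simp add: mult_2)
  also have "(\<Sum>m=1..n. F m) = 2 * (\<Sum>m=1..n. (-1) ^ m * \<Phi> (hermite_zero (2*n) m))"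
    unfolding sum_distrib_left
    by (rule sum.cong) (auto simp: F_def r_def hermite_zero_even_neg_iff neg_one_power_diff power_add)
  also have "(\<Sum>m=n+1..2*n. F m) = 2 * (\<Sum>m=n+1..2*n. (-1) ^ Suc m * \<Phi> (hermite_zero (2*n) m))"
    unfolding sum_distrib_left
    by (rule sum.cong) (auto simp: F_def r_def hermite_zero_even_neg_iff neg_one_power_diff power_add)
  finally show ?thesis
    by (simp add: add.assoc)
qed

lemma integral_power_abs_hermite_fun_even:
  assumes "n \<ge> 1"
  shows "(\<integral>t. \<bar>t\<bar> ^ (2*n - 1) / fact (2*n - 1) * \<bar>hermite_fun (2*n) t\<bar> \<partial>lborel)
    = (1 / fact (2*n)) * (\<Sum>m=1..n. (-1) ^ (m + 1) * hermite_sum (2*n-1) (hermite_zero (2*n) m))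
      + (-1) ^ n / (fact (2*n) * 2 ^ (2*n - 1) * sqrt pi)
      + (1 / fact (2*n)) * (\<Sum>m=n+1..2*n. (-1) ^ m * hermite_sum (2*n-1) (hermite_zero (2*n) m))"
proof -
  define K where "K = 2 * n - 1"
  have SK: "Suc K = 2 * n" and "odd K"
    using assms unfolding K_def by presburger+
  let ?S = "insert 0 (hermite_zeros (2 * n))"
  define \<phi> where "\<phi> t = t ^ K / fact K * hermite_fun (2 * n) t" for t
  define \<Phi> where "\<Phi> t = - hermite_sum K t / (2 * fact (2 * n))" for t
  have abs_power: "\<bar>t ^ K\<bar> = (-1) ^ (if t < 0 then 1 else 0) * t ^ K" for t :: real
    using \<open>odd K\<close> by (cases "t < 0") (simp_all add: power_less_zero_eq abs_of_neg)
  have "(\<integral>t. \<bar>\<phi> t\<bar> \<partial>lborel) = (\<Sum>z\<in>?S. 2 * (-1) ^ Suc (card {w\<in>?S. z < w}) * \<Phi> z)"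
  proof (rule integral_abs_eq_sign_sum)
    show "finite ?S"
      using finite_hermite_zeros by simp
    show "DERIV \<Phi> t :> \<phi> t" for t
      unfolding \<Phi>_def \<phi>_def by (rule hermite_sum_antideriv[of K, unfolded SK])
    show "isCont \<phi> t" for t
      unfolding \<phi>_def by (intro continuous_intros isCont_hermite_fun) simp
    show "\<phi> z = 0" if "z \<in> ?S" for z
      using that odd_pos[OF \<open>odd K\<close>] by (auto simp: \<phi>_def hermite_fun_hermite_zeros)
    \<comment> \<open>\<open>t ^ K\<close> changes sign at \<open>0\<close>, which therefore joins the zeros of \<open>hermite_fun (2 * n)\<close>.\<close>
    show "\<bar>\<phi> t\<bar> = (-1) ^ card {z\<in>?S. t < z} * \<phi> t" for t
      unfolding \<phi>_def card_greater_insert[OF finite_hermite_zeros zero_not_mem_hermite_zeros_even]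
      by (simp add: abs_mult abs_power abs_hermite_fun power_add)
    show "(\<Phi> \<longlongrightarrow> 0) at_bot" "(\<Phi> \<longlongrightarrow> 0) at_top"
      unfolding \<Phi>_def[abs_def] using tendsto_hermite_sum[of K]
      by (auto intro!: tendsto_divide_zero tendsto_minus[where a = 0, simplified])
  qed
  also have "\<dots> = 2 * (-1) ^ Suc n * \<Phi> 0 + 2 * (\<Sum>m=1..n. (-1) ^ m * \<Phi> (hermite_zero (2*n) m))
      + 2 * (\<Sum>m=n+1..2*n. (-1) ^ Suc m * \<Phi> (hermite_zero (2*n) m))"
    by (rule sign_sum_insert_0_hermite_zeros_even)
  also have "2 * (\<Sum>m=1..n. (-1) ^ m * \<Phi> (hermite_zero (2*n) m))
      = (1 / fact (2*n)) * (\<Sum>m=1..n. (-1) ^ (m + 1) * hermite_sum K (hermite_zero (2*n) m))"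
    unfolding sum_distrib_left by (rule sum.cong) (simp_all add: \<Phi>_def)
  also have "2 * (\<Sum>m=n+1..2*n. (-1) ^ Suc m * \<Phi> (hermite_zero (2*n) m))
      = (1 / fact (2*n)) * (\<Sum>m=n+1..2*n. (-1) ^ m * hermite_sum K (hermite_zero (2*n) m))"
    unfolding sum_distrib_left by (rule sum.cong) (simp_all add: \<Phi>_def)
  also have "2 * (-1) ^ Suc n * \<Phi> 0 = (-1) ^ n / (fact (2*n) * 2 ^ K * sqrt pi)"
    by (simp add: \<Phi>_def hermite_sum_0)
  finally show ?thesis
    by (simp add: \<phi>_def K_def abs_mult power_abs add_ac)
qed

theorem corollary3p4:
  fixes n :: nat
  assumes "n \<ge> 1"
  shows "((\<integral>t. \<bar>hermite_fun n t\<bar> \<partial>lborel)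
           = (1 / real n) * (\<Sum>m=1..n. (-1) ^ (m + n) * hermite_fun (n - 1) (hermite_zero n m)))
    \<and> ((\<integral>t. t ^ (2*n) / fact (2*n) * \<bar>hermite_fun (2*n+1) t\<bar> \<partial>lborel)
           = (1 / fact (2*n+1)) * (\<Sum>m=1..2*n+1. (-1) ^ (m + 1) *
               (\<Sum>k=0..2*n. (1 / 2 ^ k) * (hermite_zero (2*n+1) m) ^ (2*n - k)
                   * hermite_fun (2*n - k) (hermite_zero (2*n+1) m))))
    \<and> ((\<integral>t. \<bar>t\<bar> ^ (2*n - 1) / fact (2*n - 1) * \<bar>hermite_fun (2*n) t\<bar> \<partial>lborel)
           = (1 / fact (2*n)) * (\<Sum>m=1..n. (-1) ^ (m + 1) *
               (\<Sum>k=0..2*n-1. (1 / 2 ^ k) * (hermite_zero (2*n) m) ^ (2*n - 1 - k)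
                   * hermite_fun (2*n - 1 - k) (hermite_zero (2*n) m)))
             + (-1) ^ n / (fact (2*n) * 2 ^ (2*n - 1) * sqrt pi)
             + (1 / fact (2*n)) * (\<Sum>m=n+1..2*n. (-1) ^ m *
               (\<Sum>k=0..2*n-1. (1 / 2 ^ k) * (hermite_zero (2*n) m) ^ (2*n - 1 - k)
                   * hermite_fun (2*n - 1 - k) (hermite_zero (2*n) m))))"
  using integral_abs_hermite_fun[OF assms] integral_power_abs_hermite_fun_odd[of n]
    integral_power_abs_hermite_fun_even[OF assms]
  unfolding hermite_sum_def by blast

end
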